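(* Let $v,w:S\to[0,\infty]$ be measurable with $0<\mu_sv<\infty$, $0<\mu_sw<\infty$ for all $s\in S$ and $\frac{\mu_bw}{\mu_bv}=\frac{\mu_{b'}w}{\mu_{b'}v}$ for all $b,b'\in O$. Let $\xi,\eta$ be invariant random measures on $S$ and $m:\Omega\times S\times S\to[0,\infty]$ measurable and invariant. Then $$\mathbb E\iint\Delta_v(s,t)w(s)m(\theta_e,s,t)\,\xi(ds)\,\eta(dt)=\mathbb E\iint w(t)m(\theta_e,s,t)\,\xi(ds)\,\eta(dt),$$ where $\Delta_v(s,t):=\mu_tv/\mu_sv$.
   Context: $G$ is a locally compact second countable Hausdorff group with left Haar measure $\lambda$. $(S,\mathcal S)$ is a Borel space on which $G$ acts measurably and properly (with $\mu_s$ the image of $\lambda$ under $g\mapsto gs$, there is a measurable partition $B_1,B_2,\dots$ of $S$ with $\mu_s(B_n)<\infty$ for all $s,n$). $O\in\mathcal S$ is a fixed system of orbit representatives. $G$ acts measurably on $(\Omega,\mathcal A)$ via $\theta_g$ ($\theta_e$ the identity); $\mathbb P$ is a $\sigma$-finite measure on $\Omega$ with $\mathbb P\circ\theta_g^{-1}=\mathbb P$ and $\mathbb E$ is integration w.r.t. $\mathbb P$ in $\omega$. A random measure is a kernel $\xi$ from $\Omega$ to $S$ with a partition $B_1,B_2,\dots$ of $S$ such that $\xi(B_i)<\infty$ $\mathbb P$-a.e.; invariant: $\xi(\theta_g\omega,B)=\xi(\omega,g^{-1}B)$. $m$ invariant: $m(\theta_g\omega,gs,gt)=m(\omega,s,t)$.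 *)

theory Defs
  imports "HOL-Analysis.Analysis"
begin

text \<open>The group G is a type 'g of class topological_group_add (group written additively:
  g + h is the group product, 0 the neutral element e, - g the inverse).\<close>

definition lcsc_group :: "'g::{topological_group_add, second_countable_topology, t2_space} itself \<Rightarrow> bool" where
  "lcsc_group _ \<longleftrightarrow> locally_compact_space (euclidean :: 'g topology)"

definition left_haar :: "'g::{topological_group_add, second_countable_topology, t2_space} measure \<Rightarrow> bool" where
  "left_haar lam \<longleftrightarrow> sets lam = sets borel
     \<and> (\<forall>g. \<forall>A\<in>sets borel. emeasure lam ((\<lambda>x. g + x) ` A) = emeasure lam A)
     \<and> (\<forall>K. compact K \<longrightarrow> emeasure lam K < \<infinity>)
     \<and> (\<forall>U. open U \<and> U \<noteq> {} \<longrightarrow> emeasure lam U > 0)"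

definition borel_space :: "'s measure \<Rightarrow> bool" where
  "borel_space S \<longleftrightarrow> (\<exists>A f h. A \<in> sets (borel :: real measure) \<and> A \<subseteq> {0..1}
      \<and> f \<in> measurable S (restrict_space borel A) \<and> h \<in> measurable (restrict_space borel A) S
      \<and> (\<forall>x\<in>space S. h (f x) = x) \<and> (\<forall>y\<in>A. f (h y) = y))"

definition measurable_action :: "'g::{topological_group_add, second_countable_topology, t2_space} itself
     \<Rightarrow> 'a measure \<Rightarrow> ('g \<Rightarrow> 'a \<Rightarrow> 'a) \<Rightarrow> bool" where
  "measurable_action _ M act \<longleftrightarrow>
     (\<lambda>(g, x). act g x) \<in> measurable ((borel :: 'g measure) \<Otimes>\<^sub>M M) M
     \<and> (\<forall>x\<in>space M. act 0 x = x)
     \<and> (\<forall>g h. \<forall>x\<in>space M. act (g + h) x = act g (act h x))"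

definition orbit_measure :: "'g measure \<Rightarrow> 's measure \<Rightarrow> ('g \<Rightarrow> 's \<Rightarrow> 's) \<Rightarrow> 's \<Rightarrow> 's measure" where
  "orbit_measure lam S act s = distr lam S (\<lambda>g. act g s)"

definition measurable_partition :: "'s measure \<Rightarrow> (nat \<Rightarrow> 's set) \<Rightarrow> bool" where
  "measurable_partition S B \<longleftrightarrow> (\<forall>n. B n \<in> sets S) \<and> disjoint_family B \<and> (\<Union>n. B n) = space S"

definition proper_action :: "'g measure \<Rightarrow> 's measure \<Rightarrow> ('g \<Rightarrow> 's \<Rightarrow> 's) \<Rightarrow> bool" where
  "proper_action lam S act \<longleftrightarrow> (\<exists>B. measurable_partition S B
      \<and> (\<forall>s\<in>space S. \<forall>n. emeasure (orbit_measure lam S act s) (B n) < \<infinity>))"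

definition orbit_representatives :: "'s measure \<Rightarrow> ('g \<Rightarrow> 's \<Rightarrow> 's) \<Rightarrow> 's set \<Rightarrow> bool" where
  "orbit_representatives S act R \<longleftrightarrow> R \<in> sets S
      \<and> (\<forall>s\<in>space S. \<exists>!b. b \<in> R \<and> (\<exists>g. act g s = b))"

definition random_measure :: "'w measure \<Rightarrow> 's measure \<Rightarrow> ('w \<Rightarrow> 's measure) \<Rightarrow> bool" where
  "random_measure P S \<xi> \<longleftrightarrow>
     (\<forall>\<omega>\<in>space P. sets (\<xi> \<omega>) = sets S)
     \<and> (\<forall>B\<in>sets S. (\<lambda>\<omega>. emeasure (\<xi> \<omega>) B) \<in> borel_measurable P)
     \<and> (\<exists>B. measurable_partition S B \<and> (\<forall>i. AE \<omega> in P. emeasure (\<xi> \<omega>) (B i) < \<infinity>))"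

definition invariant_random_measure ::
  "'w measure \<Rightarrow> 's measure \<Rightarrow> ('g \<Rightarrow> 'w \<Rightarrow> 'w) \<Rightarrow> ('g \<Rightarrow> 's \<Rightarrow> 's) \<Rightarrow> ('w \<Rightarrow> 's measure) \<Rightarrow> bool" where
  "invariant_random_measure P S \<theta> act \<xi> \<longleftrightarrow> random_measure P S \<xi>
     \<and> (\<forall>g. \<forall>\<omega>\<in>space P. \<forall>B\<in>sets S.
          emeasure (\<xi> (\<theta> g \<omega>)) B = emeasure (\<xi> \<omega>) {s\<in>space S. act g s \<in> B})"

definition invariant_kernel_fn ::
  "'w measure \<Rightarrow> 's measure \<Rightarrow> ('g \<Rightarrow> 'w \<Rightarrow> 'w) \<Rightarrow> ('g \<Rightarrow> 's \<Rightarrow> 's) \<Rightarrow> ('w \<Rightarrow> 's \<Rightarrow> 's \<Rightarrow> ennreal) \<Rightarrow> bool" where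
  "invariant_kernel_fn P S \<theta> act m \<longleftrightarrow>
     (\<lambda>(\<omega>, s, t). m \<omega> s t) \<in> borel_measurable (P \<Otimes>\<^sub>M S \<Otimes>\<^sub>M S)
     \<and> (\<forall>g. \<forall>\<omega>\<in>space P. \<forall>s\<in>space S. \<forall>t\<in>space S. m (\<theta> g \<omega>) (act g s) (act g t) = m \<omega> s t)"

definition Delta :: "'g measure \<Rightarrow> 's measure \<Rightarrow> ('g \<Rightarrow> 's \<Rightarrow> 's) \<Rightarrow> ('s \<Rightarrow> ennreal) \<Rightarrow> 's \<Rightarrow> 's \<Rightarrow> ennreal" where
  "Delta lam S act v s t =
     (\<integral>\<^sup>+ x. v x \<partial>orbit_measure lam S act t) / (\<integral>\<^sup>+ x. v x \<partial>orbit_measure lam S act s)"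

end

theory Submission
  imports Defs "HOL-Probability.Giry_Monad"
begin

text \<open>For s in S put \<nu>(s) = \<integral> w(g^-1 s) / \<mu>_(g^-1 s) v \<lambda>(dg). Left invariance of \<lambda> makes \<nu>
  invariant under G, and Fubini together with left invariance identifies \<nu>(s) with
  \<mu>_s w / \<mu>_s v; by the hypothesis on the orbit representatives \<nu> is therefore a constant c.
  Stationarity and Fubini give the exchange formula
    E \<integral>\<integral> m(s,t) p(s,t) \<mu>_t q \<xi>(ds) \<eta>(dt) = E \<integral>\<integral> m(s,t) q(t) \<integral> p(g^-1 s, g^-1 t) \<lambda>(dg) \<xi>(ds) \<eta>(dt).
  Applied with q = v and p(s,t) = w(s) / \<mu>_s v, resp. p(s,t) = w(t) / \<mu>_t v, it turns both sides
  of the claim into c E \<integral>\<integral> m(s,t) v(t) \<xi>(ds) \<eta>(dt).\<close>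

lemma ennreal_mult_inverse_self: "(a::ennreal) \<noteq> 0 \<Longrightarrow> a < \<infinity> \<Longrightarrow> a * inverse a = 1"
  using divide_ennreal_def ennreal_divide_self by auto

text \<open>Normalizing by 1 / (1 + mass) instead of 1 / mass avoids a case split on null pieces.\<close>

definition normalized_restriction :: "'a measure \<Rightarrow> 'a set \<Rightarrow> 'a measure" where
  "normalized_restriction M A = scale_measure (inverse (1 + emeasure M A)) (density M (indicator A))"

lemma sets_normalized_restriction[simp]: "sets (normalized_restriction M A) = sets M"
  by (simp add: normalized_restriction_def)

lemma space_normalized_restriction[simp]: "space (normalized_restriction M A) = space M"
  by (rule sets_eq_imp_space_eq[OF sets_normalized_restriction])

lemma emeasure_normalized_restriction:
  assumes "A \<in> sets M" "B \<in> sets M"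
  shows "emeasure (normalized_restriction M A) B = inverse (1 + emeasure M A) * emeasure M (A \<inter> B)"
  using assms by (simp add: normalized_restriction_def emeasure_restricted)

lemma subprob_space_normalized_restriction:
  assumes A: "A \<in> sets M" and ne: "space M \<noteq> {}"
  shows "subprob_space (normalized_restriction M A)"
proof (rule subprob_spaceI)
  have "emeasure (normalized_restriction M A) (space M) = inverse (1 + emeasure M A) * emeasure M A"
    using A by (simp add: emeasure_normalized_restriction Int_absorb2 sets.sets_into_space)
  also have "\<dots> \<le> 1"
    by (metis add.commute add_pos_nonneg divide_ennreal_def divide_le_posI_ennreal
        ennreal_zero_less_one le_iff_add mult.commute mult.right_neutral zero_le)
  finally show "emeasure (normalized_restriction M A) (space (normalized_restriction M A)) \<le> 1"
    by simp
  show "space (normalized_restriction M A) \<noteq> {}" using ne by simp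
qed

lemma nn_integral_indicator_normalized_restriction:
  assumes f: "f \<in> borel_measurable M" and A: "A \<in> sets M" and fin: "emeasure M A < \<infinity>"
  shows "(\<integral>\<^sup>+x. f x * indicator A x \<partial>M)
       = (1 + emeasure M A) * (\<integral>\<^sup>+x. f x \<partial>normalized_restriction M A)"
proof -
  have "f \<in> borel_measurable (density M (indicator A))" using f by simp
  then have "(\<integral>\<^sup>+x. f x \<partial>normalized_restriction M A)
      = inverse (1 + emeasure M A) * (\<integral>\<^sup>+x. f x * indicator A x \<partial>M)"
    using f A by (simp add: normalized_restriction_def nn_integral_scale_measure nn_integral_density mult.commute)
  moreover have "(1 + emeasure M A) * inverse (1 + emeasure M A) = 1"
    using fin by (intro ennreal_mult_inverse_self) (auto simp: ennreal_add_less_top)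
  ultimately show ?thesis by (simp add: mult.assoc[symmetric])
qed

lemma nn_integral_measurable_partition:
  assumes part: "measurable_partition S B" and sets_M: "sets M = sets S"
    and fin: "\<And>i. emeasure M (B i) < \<infinity>" and f: "f \<in> borel_measurable S"
  shows "(\<integral>\<^sup>+s. f s \<partial>M)
       = (\<Sum>i. (1 + emeasure M (B i)) * (\<integral>\<^sup>+s. f s \<partial>normalized_restriction M (B i)))"
proof -
  have B: "\<And>i. B i \<in> sets M" "disjoint_family B" "(\<Union>i. B i) = space M"
    using part sets_M sets_eq_imp_space_eq[OF sets_M] unfolding measurable_partition_def by auto
  have fM: "f \<in> borel_measurable M" using f measurable_cong_sets[OF sets_M refl] by blast
  have "(\<integral>\<^sup>+s. f s \<partial>M) = (\<integral>\<^sup>+s. (\<Sum>i. f s * indicator (B i) s) \<partial>M)"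
  proof (rule nn_integral_cong)
    fix s assume "s \<in> space M"
    then obtain i where "s \<in> B i" using B(3) by auto
    then show "f s = (\<Sum>i. f s * indicator (B i) s)"
      using suminf_cmult_indicator[OF B(2), of s i "\<lambda>_. f s"] by simp
  qed
  also have "\<dots> = (\<Sum>i. \<integral>\<^sup>+s. f s * indicator (B i) s \<partial>M)"
    using fM B(1) by (intro nn_integral_suminf) auto
  finally show ?thesis
    using nn_integral_indicator_normalized_restriction[OF fM B(1) fin] by simp
qed

lemma measurable_normalized_restriction:
  assumes sets_\<kappa>: "\<And>x. x \<in> space X \<Longrightarrow> sets (\<kappa> x) = sets S"
    and emeasure_\<kappa>: "\<And>B. B \<in> sets S \<Longrightarrow> (\<lambda>x. emeasure (\<kappa> x) B) \<in> borel_measurable X"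
    and A: "A \<in> sets S" and ne: "space S \<noteq> {}"
  shows "(\<lambda>x. normalized_restriction (\<kappa> x) A) \<in> measurable X (subprob_algebra S)"
proof (rule measurable_subprob_algebra)
  fix x assume x: "x \<in> space X"
  show "subprob_space (normalized_restriction (\<kappa> x) A)"
    using A ne sets_\<kappa>[OF x] sets_eq_imp_space_eq[OF sets_\<kappa>[OF x]]
    by (intro subprob_space_normalized_restriction) auto
  show "sets (normalized_restriction (\<kappa> x) A) = sets S" using sets_\<kappa>[OF x] by simp
next
  fix B assume B: "B \<in> sets S"
  have [measurable]: "(\<lambda>x. emeasure (\<kappa> x) A) \<in> borel_measurable X"
    "(\<lambda>x. emeasure (\<kappa> x) (A \<inter> B)) \<in> borel_measurable X"
    using emeasure_\<kappa> A B by auto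
  have "(\<lambda>x. inverse (1 + emeasure (\<kappa> x) A) * emeasure (\<kappa> x) (A \<inter> B)) \<in> borel_measurable X"
    by measurable
  then show "(\<lambda>x. emeasure (normalized_restriction (\<kappa> x) A) B) \<in> borel_measurable X"
    by (rule measurable_cong[THEN iffD1, rotated]) (simp add: emeasure_normalized_restriction A B sets_\<kappa>)
qed

text \<open>Each piece of the partition, rescaled to a subprobability measure, gives a measurable map into
  the Giry monad, whose integrals are measurable.\<close>

lemma measurable_nn_integral_kernel:
  fixes \<kappa> :: "'x \<Rightarrow> 's measure"
  assumes sets_\<kappa>: "\<And>x. x \<in> space X \<Longrightarrow> sets (\<kappa> x) = sets S"
    and emeasure_\<kappa>: "\<And>A. A \<in> sets S \<Longrightarrow> (\<lambda>x. emeasure (\<kappa> x) A) \<in> borel_measurable X"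
    and part: "measurable_partition S B"
    and fin: "\<And>x i. x \<in> space X \<Longrightarrow> emeasure (\<kappa> x) (B i) < \<infinity>"
    and f: "(\<lambda>(x, s). f x s) \<in> borel_measurable (X \<Otimes>\<^sub>M S)"
  shows "(\<lambda>x. \<integral>\<^sup>+s. f x s \<partial>\<kappa> x) \<in> borel_measurable X"
proof (cases "space S = {}")
  case True
  then have "\<And>x. x \<in> space X \<Longrightarrow> (\<integral>\<^sup>+s. f x s \<partial>\<kappa> x) = 0"
    using sets_eq_imp_space_eq[OF sets_\<kappa>] by (simp add: nn_integral_empty)
  then show ?thesis by (subst measurable_cong[where g="\<lambda>_. 0"]) auto
next
  case False
  have B: "B i \<in> sets S" for i using part unfolding measurable_partition_def by auto
  have [measurable]: "(\<lambda>x. emeasure (\<kappa> x) (B i)) \<in> borel_measurable X" for i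
    using emeasure_\<kappa>[OF B] .
  have [measurable]: "(\<lambda>x. \<integral>\<^sup>+s. f x s \<partial>normalized_restriction (\<kappa> x) (B i)) \<in> borel_measurable X" for i
    using nn_integral_measurable_subprob_algebra2[OF f
        measurable_normalized_restriction[OF sets_\<kappa> emeasure_\<kappa> B False]] .
  have eq: "(\<integral>\<^sup>+s. f x s \<partial>\<kappa> x)
      = (\<Sum>i. (1 + emeasure (\<kappa> x) (B i)) * (\<integral>\<^sup>+s. f x s \<partial>normalized_restriction (\<kappa> x) (B i)))"
    if x: "x \<in> space X" for x
    using measurable_Pair2[OF f x]
    by (intro nn_integral_measurable_partition[OF part sets_\<kappa>[OF x] fin[OF x]]) simp
  have "(\<lambda>x. \<Sum>i. (1 + emeasure (\<kappa> x) (B i)) * (\<integral>\<^sup>+s. f x s \<partial>normalized_restriction (\<kappa> x) (B i)))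
      \<in> borel_measurable X"
    by measurable
  then show ?thesis by (rule measurable_cong[THEN iffD1, rotated]) (simp add: eq)
qed

definition finite_partition :: "'w measure \<Rightarrow> 's measure \<Rightarrow> ('w \<Rightarrow> 's measure) \<Rightarrow> nat \<Rightarrow> 's set" where
  "finite_partition P S \<kappa> =
     (SOME B. measurable_partition S B \<and> (\<forall>i. AE \<omega> in P. emeasure (\<kappa> \<omega>) (B i) < \<infinity>))"

definition finite_points :: "'w measure \<Rightarrow> 's measure \<Rightarrow> ('w \<Rightarrow> 's measure) \<Rightarrow> 'w set" where
  "finite_points P S \<kappa> = {\<omega> \<in> space P. \<forall>i. emeasure (\<kappa> \<omega>) (finite_partition P S \<kappa> i) < \<infinity>}"

text \<open>A version of the random measure that is finite on the pieces of the partition at every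
  point, not only almost everywhere, so that integrals against it are measurable.\<close>

definition finite_version :: "'w measure \<Rightarrow> 's measure \<Rightarrow> ('w \<Rightarrow> 's measure) \<Rightarrow> 'w \<Rightarrow> 's measure" where
  "finite_version P S \<kappa> \<omega> = (if \<omega> \<in> finite_points P S \<kappa> then \<kappa> \<omega> else null_measure S)"

context
  fixes P :: "'w measure" and S :: "'s measure" and \<kappa> :: "'w \<Rightarrow> 's measure"
  assumes rm: "random_measure P S \<kappa>"
begin

lemma
  shows measurable_partition_finite_partition: "measurable_partition S (finite_partition P S \<kappa>)"
    and AE_finite_partition: "AE \<omega> in P. emeasure (\<kappa> \<omega>) (finite_partition P S \<kappa> i) < \<infinity>"
proof -
  have "\<exists>B. measurable_partition S B \<and> (\<forall>i. AE \<omega> in P. emeasure (\<kappa> \<omega>) (B i) < \<infinity>)"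
    using rm unfolding random_measure_def by blast
  from someI_ex[OF this] show "measurable_partition S (finite_partition P S \<kappa>)"
    "AE \<omega> in P. emeasure (\<kappa> \<omega>) (finite_partition P S \<kappa> i) < \<infinity>"
    unfolding finite_partition_def by auto
qed

lemma sets_finite_partition: "finite_partition P S \<kappa> i \<in> sets S"
  using measurable_partition_finite_partition unfolding measurable_partition_def by auto

lemma sets_random_measure: "\<omega> \<in> space P \<Longrightarrow> sets (\<kappa> \<omega>) = sets S"
  using rm unfolding random_measure_def by auto

lemma space_random_measure: "\<omega> \<in> space P \<Longrightarrow> space (\<kappa> \<omega>) = space S"
  using sets_eq_imp_space_eq[OF sets_random_measure] .

lemma measurable_emeasure_random_measure:
  "A \<in> sets S \<Longrightarrow> (\<lambda>\<omega>. emeasure (\<kappa> \<omega>) A) \<in> borel_measurable P"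
  using rm unfolding random_measure_def by auto

lemma finite_points_subset_space: "finite_points P S \<kappa> \<subseteq> space P"
  unfolding finite_points_def by auto

lemma sets_finite_points: "finite_points P S \<kappa> \<in> sets P"
proof -
  have "finite_points P S \<kappa> = (\<Inter>i. {\<omega> \<in> space P. emeasure (\<kappa> \<omega>) (finite_partition P S \<kappa> i) < \<infinity>})"
    unfolding finite_points_def by auto
  also have "\<dots> \<in> sets P"
    using measurable_emeasure_random_measure[OF sets_finite_partition]
    by (intro sets.countable_INT') (auto simp: pred_def[symmetric])
  finally show ?thesis .
qed

lemma AE_finite_points: "AE \<omega> in P. \<omega> \<in> finite_points P S \<kappa>"
proof -
  have "AE \<omega> in P. \<forall>i. emeasure (\<kappa> \<omega>) (finite_partition P S \<kappa> i) < \<infinity>"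
    using AE_finite_partition by (simp add: AE_all_countable)
  then show ?thesis unfolding finite_points_def by (auto elim!: AE_mp intro!: AE_I2)
qed

lemma sigma_finite_random_measure:
  assumes \<omega>: "\<omega> \<in> finite_points P S \<kappa>"
  shows "sigma_finite_measure (\<kappa> \<omega>)"
proof (unfold_locales, intro exI conjI)
  have sp: "\<omega> \<in> space P" using \<omega> finite_points_subset_space by auto
  show "countable (range (finite_partition P S \<kappa>))" by simp
  show "range (finite_partition P S \<kappa>) \<subseteq> sets (\<kappa> \<omega>)"
    using sets_finite_partition sets_random_measure[OF sp] by auto
  show "\<Union>(range (finite_partition P S \<kappa>)) = space (\<kappa> \<omega>)"
    using measurable_partition_finite_partition space_random_measure[OF sp] unfolding measurable_partition_def by auto
  show "\<forall>a\<in>range (finite_partition P S \<kappa>). emeasure (\<kappa> \<omega>) a \<noteq> \<infinity>"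
    using \<omega> unfolding finite_points_def by (auto simp: less_top)
qed

lemma finite_version_eq[simp]: "\<omega> \<in> finite_points P S \<kappa> \<Longrightarrow> finite_version P S \<kappa> \<omega> = \<kappa> \<omega>"
  by (simp add: finite_version_def)

lemma AE_finite_version_eq: "AE \<omega> in P. finite_version P S \<kappa> \<omega> = \<kappa> \<omega>"
  using AE_finite_points by eventually_elim simp

lemma measurable_nn_integral_finite_version:
  assumes \<pi>: "\<pi> \<in> measurable X P" and f: "(\<lambda>(x, s). f x s) \<in> borel_measurable (X \<Otimes>\<^sub>M S)"
  shows "(\<lambda>x. \<integral>\<^sup>+s. f x s \<partial>finite_version P S \<kappa> (\<pi> x)) \<in> borel_measurable X"
proof (rule measurable_nn_integral_kernel[OF _ _ measurable_partition_finite_partition _ f])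
  show "sets (finite_version P S \<kappa> (\<pi> x)) = sets S" for x
    using finite_points_subset_space by (auto simp: finite_version_def sets_random_measure)
  show "emeasure (finite_version P S \<kappa> (\<pi> x)) (finite_partition P S \<kappa> i) < \<infinity>" for x i
    by (simp add: finite_version_def finite_points_def)
  fix A assume A: "A \<in> sets S"
  have "(\<lambda>\<omega>. if \<omega> \<in> finite_points P S \<kappa> then emeasure (\<kappa> \<omega>) A else 0) \<in> borel_measurable P"
    using sets_finite_points measurable_emeasure_random_measure[OF A] by (intro measurable_If_set) auto
  then have "(\<lambda>\<omega>. emeasure (finite_version P S \<kappa> \<omega>) A) \<in> borel_measurable P"
    by (rule measurable_cong[THEN iffD1, rotated]) (simp add: finite_version_def)
  then show "(\<lambda>x. emeasure (finite_version P S \<kappa> (\<pi> x)) A) \<in> borel_measurable X"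
    using measurable_compose[OF \<pi>] by blast
qed

end

lemma measurable_compose_triple:
  assumes F: "(\<lambda>(x, s, t). F x s t) \<in> borel_measurable (X \<Otimes>\<^sub>M S \<Otimes>\<^sub>M T)"
    and "f \<in> measurable M X" "g \<in> measurable M S" "h \<in> measurable M T"
  shows "(\<lambda>y. F (f y) (g y) (h y)) \<in> borel_measurable M"
  using measurable_compose[OF measurable_Pair[OF assms(2) measurable_Pair[OF assms(3,4)]] F] by simp

lemma nn_integral_triple_swap:
  assumes L: "sigma_finite_measure L" and X: "sigma_finite_measure X" and Y: "sigma_finite_measure Y"
    and F: "(\<lambda>(g, s, t). F g s t) \<in> borel_measurable (L \<Otimes>\<^sub>M X \<Otimes>\<^sub>M Y)"
  shows "(\<integral>\<^sup>+t. \<integral>\<^sup>+s. \<integral>\<^sup>+g. F g s t \<partial>L \<partial>X \<partial>Y) = (\<integral>\<^sup>+g. \<integral>\<^sup>+t. \<integral>\<^sup>+s. F g s t \<partial>X \<partial>Y \<partial>L)"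
proof -
  interpret X: sigma_finite_measure X by (rule X)
  interpret LX: pair_sigma_finite L X by (intro pair_sigma_finite.intro L X)
  interpret LY: pair_sigma_finite L Y by (intro pair_sigma_finite.intro L Y)
  note measurable_compose_triple[OF F, measurable (raw)] X.borel_measurable_nn_integral[measurable (raw)]
  have "(\<integral>\<^sup>+t. \<integral>\<^sup>+s. \<integral>\<^sup>+g. F g s t \<partial>L \<partial>X \<partial>Y) = (\<integral>\<^sup>+t. \<integral>\<^sup>+g. \<integral>\<^sup>+s. F g s t \<partial>X \<partial>L \<partial>Y)"
    by (intro nn_integral_cong LX.Fubini') measurable
  also have "\<dots> = (\<integral>\<^sup>+g. \<integral>\<^sup>+t. \<integral>\<^sup>+s. F g s t \<partial>X \<partial>Y \<partial>L)"
    by (intro LY.Fubini') measurable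
  finally show ?thesis .
qed

lemma nn_integral_iterated_distr:
  assumes X: "sigma_finite_measure X" and sets_X: "sets X = sets S" and sets_Y: "sets Y = sets S"
    and T: "T \<in> measurable S S" and H: "(\<lambda>(s, t). H s t) \<in> borel_measurable (S \<Otimes>\<^sub>M S)"
  shows "(\<integral>\<^sup>+t. \<integral>\<^sup>+s. H s t \<partial>distr X S T \<partial>distr Y S T) = (\<integral>\<^sup>+t. \<integral>\<^sup>+s. H (T s) (T t) \<partial>X \<partial>Y)"
proof -
  interpret X: sigma_finite_measure X by (rule X)
  have [measurable]: "T \<in> measurable X S" "T \<in> measurable Y S"
    using T measurable_cong_sets[OF sets_X refl] measurable_cong_sets[OF sets_Y refl] by blast+
  have [measurable (raw)]: "(\<lambda>x. H (f x) (g x)) \<in> borel_measurable M"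
    if "f \<in> measurable M S" "g \<in> measurable M S" for f g and M :: "'b measure"
    using measurable_compose[OF measurable_Pair[OF that] H] by simp
  have "(\<integral>\<^sup>+t. \<integral>\<^sup>+s. H s t \<partial>distr X S T \<partial>distr Y S T) = (\<integral>\<^sup>+t. \<integral>\<^sup>+s. H (T s) t \<partial>X \<partial>distr Y S T)"
    by (intro nn_integral_cong nn_integral_distr) measurable
  also have "\<dots> = (\<integral>\<^sup>+t. \<integral>\<^sup>+s. H (T s) (T t) \<partial>X \<partial>Y)"
    by (intro nn_integral_distr X.borel_measurable_nn_integral) measurable
  finally show ?thesis .
qed

locale haar_action =
  fixes lam :: "'g::{topological_group_add, second_countable_topology, t2_space} measure"
    and S :: "'s measure" and act :: "'g \<Rightarrow> 's \<Rightarrow> 's"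
  assumes G: "lcsc_group TYPE('g)"
    and haar: "left_haar lam"
    and act: "measurable_action TYPE('g) S act"
begin

lemma sets_lam[measurable_cong]: "sets lam = sets borel"
  using haar unfolding left_haar_def by simp

lemma space_lam[simp]: "space lam = UNIV"
  using sets_eq_imp_space_eq[OF sets_lam] by simp

lemma measurable_add: "(\<lambda>(g::'g, h). g + h) \<in> borel_measurable (borel \<Otimes>\<^sub>M borel)"
proof -
  have "(\<lambda>(g::'g, h). g + h) \<in> borel_measurable (borel :: ('g \<times> 'g) measure)"
    by (intro borel_measurable_continuous_onI) (auto intro!: continuous_intros simp: case_prod_beta')
  then show ?thesis by (simp add: borel_prod)
qed

lemma measurable_act: "(\<lambda>(g, x). act g x) \<in> measurable (borel \<Otimes>\<^sub>M S) S"
  using act unfolding measurable_action_def by simp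

lemma measurable_act'[measurable (raw)]:
  "f \<in> measurable M borel \<Longrightarrow> g \<in> measurable M S \<Longrightarrow> (\<lambda>x. act (f x) (g x)) \<in> measurable M S"
  using measurable_compose[OF measurable_Pair measurable_act, of f M g] by simp

lemma measurable_add'[measurable (raw)]:
  "f \<in> measurable M borel \<Longrightarrow> g \<in> measurable M borel \<Longrightarrow> (\<lambda>x. f x + g x :: 'g) \<in> measurable M borel"
  using measurable_compose[OF measurable_Pair measurable_add, of f M g] by simp

lemma measurable_uminus'[measurable (raw)]:
  "f \<in> measurable M borel \<Longrightarrow> (\<lambda>x. - f x :: 'g) \<in> measurable M borel"
  by (rule measurable_compose[where N=borel and g="\<lambda>x. - x"])
     (auto intro!: borel_measurable_continuous_onI continuous_intros)

lemma act_zero: "x \<in> space S \<Longrightarrow> act 0 x = x"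
  using act unfolding measurable_action_def by simp

lemma act_add: "x \<in> space S \<Longrightarrow> act (g + h) x = act g (act h x)"
  using act unfolding measurable_action_def by simp

lemma act_space: "x \<in> space S \<Longrightarrow> act g x \<in> space S"
  using measurable_space[OF measurable_act, of "(g, x)"] by (simp add: space_pair_measure)

lemma act_act_uminus: "x \<in> space S \<Longrightarrow> act g (act (-g) x) = x"
  using act_add[of x g "-g"] act_zero by simp

lemma sigma_finite_lam: "sigma_finite_measure lam"
proof
  have "locally_compact_space (euclidean :: 'g topology)" using G unfolding lcsc_group_def by simp
  then have "\<forall>x::'g. \<exists>U K. open U \<and> compact K \<and> x \<in> U \<and> U \<subseteq> K"
    unfolding locally_compact_space_def by simp
  then obtain U K where UK: "\<And>x::'g. open (U x) \<and> compact (K x) \<and> x \<in> U x \<and> U x \<subseteq> K x"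
    by metis
  obtain F where F: "F \<subseteq> range U" "countable F" "\<Union>F = \<Union>(range U)"
    using Lindelof[of "range U"] UK by blast
  have "\<Union>(range U) = UNIV" using UK by blast
  moreover have "\<forall>a\<in>F. emeasure lam a \<noteq> \<infinity>"
  proof
    fix a assume "a \<in> F"
    then obtain x where a: "a = U x" using F by auto
    have "emeasure lam a \<le> emeasure lam (K x)"
      using a UK[of x] by (intro emeasure_mono) (auto simp: sets_lam intro: borel_closed compact_imp_closed)
    also have "\<dots> < \<infinity>" using haar UK[of x] unfolding left_haar_def by blast
    finally show "emeasure lam a \<noteq> \<infinity>" by simp
  qed
  moreover have "F \<subseteq> sets lam" using F UK by (auto simp: sets_lam)
  ultimately show "\<exists>A. countable A \<and> A \<subseteq> sets lam \<and> \<Union>A = space lam \<and> (\<forall>a\<in>A. emeasure lam a \<noteq> \<infinity>)"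
    using F by auto
qed

sublocale lam: sigma_finite_measure lam by (rule sigma_finite_lam)

lemma distr_left_translation: "distr lam lam (\<lambda>x. h + x) = lam"
proof (rule measure_eqI)
  show "sets (distr lam lam (\<lambda>x. h + x)) = sets lam" by simp
next
  fix A assume A: "A \<in> sets (distr lam lam (\<lambda>x. h + x))"
  have m: "(\<lambda>x. h + x) \<in> measurable lam lam" by (simp add: measurable_cong_sets[OF sets_lam sets_lam])
  have "(\<lambda>x. h + x) -` A \<inter> space lam = (\<lambda>x. -h + x) ` A"
    by (auto simp: image_iff) (metis add_minus_cancel)
  then have "emeasure (distr lam lam (\<lambda>x. h + x)) A = emeasure lam ((\<lambda>x. -h + x) ` A)"
    using A by (simp add: emeasure_distr[OF m])
  also have "\<dots> = emeasure lam A" using haar A unfolding left_haar_def by (simp add: sets_lam)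
  finally show "emeasure (distr lam lam (\<lambda>x. h + x)) A = emeasure lam A" .
qed

lemma nn_integral_left_translation:
  assumes f: "f \<in> borel_measurable borel"
  shows "(\<integral>\<^sup>+x. f (h + x) \<partial>lam) = (\<integral>\<^sup>+x. f x \<partial>lam)"
proof -
  have m: "(\<lambda>x. h + x) \<in> measurable lam lam" by (simp add: measurable_cong_sets[OF sets_lam sets_lam])
  have "(\<integral>\<^sup>+x. f x \<partial>lam) = (\<integral>\<^sup>+x. f x \<partial>distr lam lam (\<lambda>x. h + x))"
    by (simp add: distr_left_translation)
  also have "\<dots> = (\<integral>\<^sup>+x. f (h + x) \<partial>lam)"
    by (rule nn_integral_distr[OF m]) (simp add: measurable_cong_sets[OF sets_lam] f)
  finally show ?thesis ..
qed

lemma nn_integral_translation_product: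
  assumes [measurable]: "\<phi> \<in> borel_measurable borel" "\<psi> \<in> borel_measurable borel"
  shows "(\<integral>\<^sup>+x. \<integral>\<^sup>+h. \<phi> x * \<psi> (h + x) \<partial>lam \<partial>lam) = (\<integral>\<^sup>+x. \<psi> x \<partial>lam) * (\<integral>\<^sup>+h. \<phi> (-h) \<partial>lam)"
proof -
  interpret pair_sigma_finite lam lam by unfold_locales
  have "(\<integral>\<^sup>+x. \<integral>\<^sup>+h. \<phi> x * \<psi> (h + x) \<partial>lam \<partial>lam) = (\<integral>\<^sup>+h. \<integral>\<^sup>+x. \<phi> x * \<psi> (h + x) \<partial>lam \<partial>lam)"
    by (rule Fubini'[symmetric]) measurable
  also have "\<dots> = (\<integral>\<^sup>+h. \<integral>\<^sup>+x. \<phi> (-h + x) * \<psi> x \<partial>lam \<partial>lam)"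
  proof (rule nn_integral_cong)
    fix h
    have "(\<integral>\<^sup>+x. \<phi> (-h + x) * \<psi> x \<partial>lam) = (\<integral>\<^sup>+x. \<phi> (-h + (h + x)) * \<psi> (h + x) \<partial>lam)"
      by (rule nn_integral_left_translation[symmetric]) measurable
    then show "(\<integral>\<^sup>+x. \<phi> x * \<psi> (h + x) \<partial>lam) = (\<integral>\<^sup>+x. \<phi> (-h + x) * \<psi> x \<partial>lam)"
      by (simp add: add.assoc[symmetric])
  qed
  also have "\<dots> = (\<integral>\<^sup>+x. \<integral>\<^sup>+h. \<phi> (-h + x) * \<psi> x \<partial>lam \<partial>lam)"
    by (rule Fubini') measurable
  also have "\<dots> = (\<integral>\<^sup>+x. \<psi> x * (\<integral>\<^sup>+h. \<phi> (-h) \<partial>lam) \<partial>lam)"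
  proof (rule nn_integral_cong)
    fix x
    have "(\<integral>\<^sup>+h. \<phi> (-h + x) \<partial>lam) = (\<integral>\<^sup>+h. \<phi> (-(x + h) + x) \<partial>lam)"
      by (rule nn_integral_left_translation[symmetric]) measurable
    then have "(\<integral>\<^sup>+h. \<phi> (-h + x) \<partial>lam) = (\<integral>\<^sup>+h. \<phi> (-h) \<partial>lam)"
      by (simp add: minus_add add.assoc)
    then show "(\<integral>\<^sup>+h. \<phi> (-h + x) * \<psi> x \<partial>lam) = \<psi> x * (\<integral>\<^sup>+h. \<phi> (-h) \<partial>lam)"
      by (subst nn_integral_multc) (simp_all add: mult.commute)
  qed
  also have "\<dots> = (\<integral>\<^sup>+x. \<psi> x \<partial>lam) * (\<integral>\<^sup>+h. \<phi> (-h) \<partial>lam)"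
    by (simp add: nn_integral_multc)
  finally show ?thesis .
qed

definition orbit_integral :: "('s \<Rightarrow> ennreal) \<Rightarrow> 's \<Rightarrow> ennreal" where
  "orbit_integral f s = (\<integral>\<^sup>+g. f (act g s) \<partial>lam)"

lemma measurable_orbit_integral[measurable]:
  assumes [measurable]: "f \<in> borel_measurable S"
  shows "orbit_integral f \<in> borel_measurable S"
  unfolding orbit_integral_def by measurable

lemma nn_integral_orbit_measure:
  assumes [measurable]: "f \<in> borel_measurable S" and s: "s \<in> space S"
  shows "(\<integral>\<^sup>+x. f x \<partial>orbit_measure lam S act s) = orbit_integral f s"
  unfolding orbit_measure_def orbit_integral_def
  by (rule nn_integral_distr) (use s in measurable)

lemma nn_integral_inverse_orbit_act:
  assumes [measurable]: "f \<in> borel_measurable S" and s: "s \<in> space S"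
  shows "(\<integral>\<^sup>+g. f (act (-g) (act h s)) \<partial>lam) = (\<integral>\<^sup>+g. f (act (-g) s) \<partial>lam)"
proof -
  have "(\<integral>\<^sup>+g. f (act (-g) (act h s)) \<partial>lam) = (\<integral>\<^sup>+g. f (act (-(h + g)) (act h s)) \<partial>lam)"
    by (rule nn_integral_left_translation[symmetric]) (use s in measurable)
  also have "\<dots> = (\<integral>\<^sup>+g. f (act (-g) s) \<partial>lam)"
    using s by (simp add: act_add[symmetric] minus_add add.assoc)
  finally show ?thesis .
qed

lemma nn_integral_inverse_orbit_ratio:
  assumes [measurable]: "v \<in> borel_measurable S" "w \<in> borel_measurable S"
    and v_pos: "\<And>s. s \<in> space S \<Longrightarrow> 0 < orbit_integral v s \<and> orbit_integral v s < \<infinity>"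
    and s: "s \<in> space S"
  shows "(\<integral>\<^sup>+g. w (act (-g) s) / orbit_integral v (act (-g) s) \<partial>lam)
       = orbit_integral w s / orbit_integral v s"
proof -
  define \<phi> where "\<phi> x = w (act x s) / orbit_integral v (act x s)" for x
  have [measurable]: "\<phi> \<in> borel_measurable borel" unfolding \<phi>_def using s by measurable
  have "orbit_integral w s = (\<integral>\<^sup>+x. \<phi> x * orbit_integral v (act x s) \<partial>lam)"
    unfolding orbit_integral_def[of w]
  proof (rule nn_integral_cong)
    fix x
    have "orbit_integral v (act x s) \<noteq> 0" "orbit_integral v (act x s) < \<infinity>"
      using v_pos[OF act_space[OF s, of x]] by auto
    then show "w (act x s) = \<phi> x * orbit_integral v (act x s)"
      by (simp add: \<phi>_def ennreal_divide_times)
  qed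
  also have "\<dots> = (\<integral>\<^sup>+x. \<integral>\<^sup>+h. \<phi> x * v (act (h + x) s) \<partial>lam \<partial>lam)"
    unfolding orbit_integral_def using s by (intro nn_integral_cong) (simp add: act_add nn_integral_cmult)
  also have "\<dots> = orbit_integral v s * (\<integral>\<^sup>+h. \<phi> (-h) \<partial>lam)"
    unfolding orbit_integral_def using s by (intro nn_integral_translation_product) measurable
  finally have "orbit_integral w s = (\<integral>\<^sup>+h. \<phi> (-h) \<partial>lam) * orbit_integral v s"
    by (simp add: mult.commute)
  moreover have "orbit_integral v s \<noteq> 0" "orbit_integral v s \<noteq> \<infinity>" using v_pos[OF s] by auto
  ultimately show ?thesis by (simp add: \<phi>_def ennreal_mult_divide_eq)
qed

text \<open>\<mu>_(g s) involves a right translation of \<lambda>, so neither orbit integral is invariant on its own;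
  the invariance of the ratio comes from its left-invariant representation above.\<close>

lemma orbit_ratio_act:
  assumes "v \<in> borel_measurable S" "w \<in> borel_measurable S"
    and "\<And>s. s \<in> space S \<Longrightarrow> 0 < orbit_integral v s \<and> orbit_integral v s < \<infinity>"
    and s: "s \<in> space S"
  shows "orbit_integral w (act h s) / orbit_integral v (act h s) = orbit_integral w s / orbit_integral v s"
  using assms nn_integral_inverse_orbit_act[of "\<lambda>x. w x / orbit_integral v x" s h]
  by (simp add: nn_integral_inverse_orbit_ratio act_space)

lemma orbit_ratio_constant:
  assumes v: "v \<in> borel_measurable S" and w: "w \<in> borel_measurable S"
    and v_pos: "\<And>s. s \<in> space S \<Longrightarrow> 0 < orbit_integral v s \<and> orbit_integral v s < \<infinity>"
    and Orb: "orbit_representatives S act Orb"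
    and ratio: "\<And>b b'. b \<in> Orb \<Longrightarrow> b' \<in> Orb \<Longrightarrow>
      orbit_integral w b / orbit_integral v b = orbit_integral w b' / orbit_integral v b'"
    and s: "s \<in> space S" and t: "t \<in> space S"
  shows "orbit_integral w s / orbit_integral v s = orbit_integral w t / orbit_integral v t"
proof -
  have rep: "\<exists>b\<in>Orb. orbit_integral w x / orbit_integral v x = orbit_integral w b / orbit_integral v b"
    if x: "x \<in> space S" for x
  proof -
    obtain b g where "b \<in> Orb" "act g x = b" using Orb x unfolding orbit_representatives_def by blast
    then show ?thesis using orbit_ratio_act[OF v w v_pos x, of g] by metis
  qed
  show ?thesis using rep[OF s] rep[OF t] ratio by metis
qed

end

locale stationary_random_measures = haar_action lam S act
  for lam :: "'g::{topological_group_add, second_countable_topology, t2_space} measure"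
    and S :: "'s measure" and act +
  fixes P :: "'w measure" and \<theta> :: "'g \<Rightarrow> 'w \<Rightarrow> 'w" and \<xi> \<eta> :: "'w \<Rightarrow> 's measure"
    and m :: "'w \<Rightarrow> 's \<Rightarrow> 's \<Rightarrow> ennreal"
  assumes \<theta>: "measurable_action TYPE('g) P \<theta>"
    and P_sigma: "sigma_finite_measure P"
    and P_inv: "\<And>g. distr P P (\<theta> g) = P"
    and \<xi>: "invariant_random_measure P S \<theta> act \<xi>"
    and \<eta>: "invariant_random_measure P S \<theta> act \<eta>"
    and m: "invariant_kernel_fn P S \<theta> act m"
begin

sublocale P: sigma_finite_measure P by (rule P_sigma)

lemma measurable_\<theta>[measurable (raw)]:
  assumes "f \<in> measurable M borel" "g \<in> measurable M P"
  shows "(\<lambda>x. \<theta> (f x) (g x)) \<in> measurable M P"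
proof -
  have "(\<lambda>(g, x). \<theta> g x) \<in> measurable (borel \<Otimes>\<^sub>M P) P"
    using \<theta> unfolding measurable_action_def by simp
  from measurable_compose[OF measurable_Pair[OF assms] this] show ?thesis by simp
qed

lemma measurable_m[measurable (raw)]:
  "f \<in> measurable M P \<Longrightarrow> g \<in> measurable M S \<Longrightarrow> h \<in> measurable M S
    \<Longrightarrow> (\<lambda>x. m (f x) (g x) (h x)) \<in> borel_measurable M"
  using m measurable_compose_triple[of m P S S] unfolding invariant_kernel_fn_def by blast

lemma m_invariant:
  "\<omega> \<in> space P \<Longrightarrow> s \<in> space S \<Longrightarrow> t \<in> space S \<Longrightarrow> m (\<theta> g \<omega>) (act g s) (act g t) = m \<omega> s t"
  using m unfolding invariant_kernel_fn_def by simp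

lemma random_measure_\<xi>: "random_measure P S \<xi>"
  using \<xi> unfolding invariant_random_measure_def by simp

lemma random_measure_\<eta>: "random_measure P S \<eta>"
  using \<eta> unfolding invariant_random_measure_def by simp

abbreviation "\<xi>' \<equiv> finite_version P S \<xi>"
abbreviation "\<eta>' \<equiv> finite_version P S \<eta>"

lemma invariant_random_measure_shift:
  assumes inv: "invariant_random_measure P S \<theta> act \<kappa>" and \<omega>: "\<omega> \<in> space P"
  shows "\<kappa> (\<theta> g \<omega>) = distr (\<kappa> \<omega>) S (act g)"
proof (rule measure_eqI)
  have rm: "random_measure P S \<kappa>" using inv unfolding invariant_random_measure_def by simp
  have \<theta>\<omega>: "\<theta> g \<omega> \<in> space P" using measurable_space[of "\<theta> g" P P \<omega>] \<omega> by measurable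
  show "sets (\<kappa> (\<theta> g \<omega>)) = sets (distr (\<kappa> \<omega>) S (act g))" using sets_random_measure[OF rm \<theta>\<omega>] by simp
  fix A assume "A \<in> sets (\<kappa> (\<theta> g \<omega>))"
  then have A: "A \<in> sets S" using sets_random_measure[OF rm \<theta>\<omega>] by simp
  have "act g \<in> measurable (\<kappa> \<omega>) S"
    unfolding measurable_cong_sets[OF sets_random_measure[OF rm \<omega>] refl] by measurable
  then have "emeasure (distr (\<kappa> \<omega>) S (act g)) A = emeasure (\<kappa> \<omega>) {s\<in>space S. act g s \<in> A}"
    using A space_random_measure[OF rm \<omega>] by (simp add: emeasure_distr Int_def conj_commute)
  also have "\<dots> = emeasure (\<kappa> (\<theta> g \<omega>)) A"
    using inv \<omega> A unfolding invariant_random_measure_def by simp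
  finally show "emeasure (\<kappa> (\<theta> g \<omega>)) A = emeasure (distr (\<kappa> \<omega>) S (act g)) A" ..
qed

lemma AE_shift_finite_points:
  assumes rm: "random_measure P S \<kappa>"
  shows "AE \<omega> in P. \<theta> g \<omega> \<in> finite_points P S \<kappa>"
proof -
  have \<theta>g: "\<theta> g \<in> measurable P P" by measurable
  have "AE \<omega> in distr P P (\<theta> g). \<omega> \<in> finite_points P S \<kappa>"
    by (subst P_inv) (rule AE_finite_points[OF rm])
  moreover have "{\<omega> \<in> space P. \<omega> \<in> finite_points P S \<kappa>} \<in> sets P"
    using sets_finite_points[OF rm] finite_points_subset_space[OF rm] by (simp add: Int_absorb1 Collect_mem_eq)
  ultimately show ?thesis using AE_distr_iff[OF \<theta>g, of "\<lambda>\<omega>. \<omega> \<in> finite_points P S \<kappa>"] by blast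
qed

lemma measurable_iterated_finite_version:
  assumes \<pi>[measurable]: "\<pi> \<in> measurable X P"
    and F: "(\<lambda>(x, s, t). F x s t) \<in> borel_measurable (X \<Otimes>\<^sub>M S \<Otimes>\<^sub>M S)"
  shows "(\<lambda>x. \<integral>\<^sup>+t. \<integral>\<^sup>+s. F x s t \<partial>\<xi>' (\<pi> x) \<partial>\<eta>' (\<pi> x)) \<in> borel_measurable X"
proof -
  note measurable_compose_triple[OF F, measurable (raw)]
  have "(\<lambda>y. \<integral>\<^sup>+s. F (fst y) s (snd y) \<partial>\<xi>' (\<pi> (fst y))) \<in> borel_measurable (X \<Otimes>\<^sub>M S)"
    by (rule measurable_nn_integral_finite_version[OF random_measure_\<xi>]) measurable
  then have "(\<lambda>(x, t). \<integral>\<^sup>+s. F x s t \<partial>\<xi>' (\<pi> x)) \<in> borel_measurable (X \<Otimes>\<^sub>M S)"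
    by (simp add: case_prod_beta')
  then show ?thesis by (rule measurable_nn_integral_finite_version[OF random_measure_\<eta> \<pi>])
qed

lemma expectation_finite_version:
  "(\<integral>\<^sup>+\<omega>. \<integral>\<^sup>+t. \<integral>\<^sup>+s. H \<omega> s t \<partial>\<xi> \<omega> \<partial>\<eta> \<omega> \<partial>P) = (\<integral>\<^sup>+\<omega>. \<integral>\<^sup>+t. \<integral>\<^sup>+s. H \<omega> s t \<partial>\<xi>' \<omega> \<partial>\<eta>' \<omega> \<partial>P)"
  using AE_finite_version_eq[OF random_measure_\<xi>] AE_finite_version_eq[OF random_measure_\<eta>]
  by (intro nn_integral_cong_AE, eventually_elim) simp

lemma expectation_cong:
  assumes "\<And>\<omega> s t. \<omega> \<in> space P \<Longrightarrow> s \<in> space S \<Longrightarrow> t \<in> space S \<Longrightarrow> H \<omega> s t = H' \<omega> s t"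
  shows "(\<integral>\<^sup>+\<omega>. \<integral>\<^sup>+t. \<integral>\<^sup>+s. H \<omega> s t \<partial>\<xi> \<omega> \<partial>\<eta> \<omega> \<partial>P) = (\<integral>\<^sup>+\<omega>. \<integral>\<^sup>+t. \<integral>\<^sup>+s. H' \<omega> s t \<partial>\<xi> \<omega> \<partial>\<eta> \<omega> \<partial>P)"
  using assms
  by (intro nn_integral_cong)
     (auto simp: space_random_measure[OF random_measure_\<xi>] space_random_measure[OF random_measure_\<eta>])

lemma expectation_invariant:
  assumes H: "(\<lambda>(\<omega>, s, t). H \<omega> s t) \<in> borel_measurable (P \<Otimes>\<^sub>M S \<Otimes>\<^sub>M S)"
  shows "(\<integral>\<^sup>+\<omega>. \<integral>\<^sup>+t. \<integral>\<^sup>+s. H \<omega> s t \<partial>\<xi> \<omega> \<partial>\<eta> \<omega> \<partial>P)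
       = (\<integral>\<^sup>+\<omega>. \<integral>\<^sup>+t. \<integral>\<^sup>+s. H (\<theta> g \<omega>) (act g s) (act g t) \<partial>\<xi> \<omega> \<partial>\<eta> \<omega> \<partial>P)"
proof -
  note measurable_compose_triple[OF H, measurable (raw)]
  define Y where "Y \<omega> = (\<integral>\<^sup>+t. \<integral>\<^sup>+s. H \<omega> s t \<partial>\<xi>' \<omega> \<partial>\<eta>' \<omega>)" for \<omega>
  have Y: "Y \<in> borel_measurable P"
    unfolding Y_def using measurable_iterated_finite_version[OF measurable_ident H] by simp
  have Y_shift: "Y (\<theta> g \<omega>) = (\<integral>\<^sup>+t. \<integral>\<^sup>+s. H (\<theta> g \<omega>) (act g s) (act g t) \<partial>\<xi> \<omega> \<partial>\<eta> \<omega>)"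
    if \<omega>: "\<omega> \<in> finite_points P S \<xi>"
      and \<theta>\<omega>: "\<theta> g \<omega> \<in> finite_points P S \<xi>" "\<theta> g \<omega> \<in> finite_points P S \<eta>" for \<omega>
  proof -
    have sp: "\<omega> \<in> space P" "\<theta> g \<omega> \<in> space P"
      using \<omega> \<theta>\<omega> finite_points_subset_space[OF random_measure_\<xi>] by auto
    have "Y (\<theta> g \<omega>) = (\<integral>\<^sup>+t. \<integral>\<^sup>+s. H (\<theta> g \<omega>) s t \<partial>distr (\<xi> \<omega>) S (act g) \<partial>distr (\<eta> \<omega>) S (act g))"
      using \<theta>\<omega> by (simp add: Y_def finite_version_eq[OF random_measure_\<xi>]
          finite_version_eq[OF random_measure_\<eta>] invariant_random_measure_shift[OF \<xi> sp(1)]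
          invariant_random_measure_shift[OF \<eta> sp(1)])
    also have "\<dots> = (\<integral>\<^sup>+t. \<integral>\<^sup>+s. H (\<theta> g \<omega>) (act g s) (act g t) \<partial>\<xi> \<omega> \<partial>\<eta> \<omega>)"
      using sp(2)
      by (intro nn_integral_iterated_distr sigma_finite_random_measure[OF random_measure_\<xi> \<omega>]
          sets_random_measure[OF random_measure_\<xi> sp(1)] sets_random_measure[OF random_measure_\<eta> sp(1)])
         measurable
    finally show ?thesis .
  qed
  have "(\<integral>\<^sup>+\<omega>. \<integral>\<^sup>+t. \<integral>\<^sup>+s. H \<omega> s t \<partial>\<xi> \<omega> \<partial>\<eta> \<omega> \<partial>P) = (\<integral>\<^sup>+\<omega>. Y \<omega> \<partial>distr P P (\<theta> g))"
    unfolding Y_def P_inv by (rule expectation_finite_version)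
  also have "\<dots> = (\<integral>\<^sup>+\<omega>. Y (\<theta> g \<omega>) \<partial>P)"
    using Y by (intro nn_integral_distr) (simp_all add: P_inv)
  also have "\<dots> = (\<integral>\<^sup>+\<omega>. \<integral>\<^sup>+t. \<integral>\<^sup>+s. H (\<theta> g \<omega>) (act g s) (act g t) \<partial>\<xi> \<omega> \<partial>\<eta> \<omega> \<partial>P)"
    using AE_finite_points[OF random_measure_\<xi>] AE_shift_finite_points[OF random_measure_\<xi>]
      AE_shift_finite_points[OF random_measure_\<eta>]
    by (intro nn_integral_cong_AE, eventually_elim) (rule Y_shift)
  finally show ?thesis .
qed

lemma nn_integral_haar_swap:
  assumes \<xi>\<omega>: "\<omega> \<in> finite_points P S \<xi>" and \<eta>\<omega>: "\<omega> \<in> finite_points P S \<eta>"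
    and F: "(\<lambda>(g, s, t). F g s t) \<in> borel_measurable (lam \<Otimes>\<^sub>M S \<Otimes>\<^sub>M S)"
  shows "(\<integral>\<^sup>+t. \<integral>\<^sup>+s. \<integral>\<^sup>+g. F g s t \<partial>lam \<partial>\<xi> \<omega> \<partial>\<eta> \<omega>) = (\<integral>\<^sup>+g. \<integral>\<^sup>+t. \<integral>\<^sup>+s. F g s t \<partial>\<xi> \<omega> \<partial>\<eta> \<omega> \<partial>lam)"
proof (rule nn_integral_triple_swap[OF sigma_finite_lam sigma_finite_random_measure[OF random_measure_\<xi> \<xi>\<omega>]
      sigma_finite_random_measure[OF random_measure_\<eta> \<eta>\<omega>]])
  have \<omega>: "\<omega> \<in> space P" using \<xi>\<omega> finite_points_subset_space[OF random_measure_\<xi>] by auto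
  have "sets (lam \<Otimes>\<^sub>M \<xi> \<omega> \<Otimes>\<^sub>M \<eta> \<omega>) = sets (lam \<Otimes>\<^sub>M S \<Otimes>\<^sub>M S)"
    by (intro sets_pair_measure_cong refl sets_random_measure[OF random_measure_\<xi> \<omega>]
        sets_random_measure[OF random_measure_\<eta> \<omega>])
  then show "(\<lambda>(g, s, t). F g s t) \<in> borel_measurable (lam \<Otimes>\<^sub>M \<xi> \<omega> \<Otimes>\<^sub>M \<eta> \<omega>)"
    using F measurable_cong_sets by blast
qed

lemma expectation_haar_swap:
  assumes F: "(\<lambda>(g, \<omega>, s, t). F g \<omega> s t) \<in> borel_measurable (lam \<Otimes>\<^sub>M P \<Otimes>\<^sub>M S \<Otimes>\<^sub>M S)"
  shows "(\<integral>\<^sup>+\<omega>. \<integral>\<^sup>+t. \<integral>\<^sup>+s. \<integral>\<^sup>+g. F g \<omega> s t \<partial>lam \<partial>\<xi> \<omega> \<partial>\<eta> \<omega> \<partial>P)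
       = (\<integral>\<^sup>+g. \<integral>\<^sup>+\<omega>. \<integral>\<^sup>+t. \<integral>\<^sup>+s. F g \<omega> s t \<partial>\<xi> \<omega> \<partial>\<eta> \<omega> \<partial>P \<partial>lam)"
proof -
  interpret lamP: pair_sigma_finite lam P by unfold_locales
  have [measurable (raw)]: "(\<lambda>x. F (a x) (b x) (c x) (d x)) \<in> borel_measurable M"
    if "a \<in> measurable M lam" "b \<in> measurable M P" "c \<in> measurable M S" "d \<in> measurable M S"
    for a b c d and M :: "'z measure"
    using measurable_compose[OF measurable_Pair[OF that(1) measurable_Pair[OF that(2)
          measurable_Pair[OF that(3,4)]]] F] by simp
  define Z where "Z g \<omega> = (\<integral>\<^sup>+t. \<integral>\<^sup>+s. F g \<omega> s t \<partial>\<xi>' \<omega> \<partial>\<eta>' \<omega>)" for g \<omega>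
  have "(\<lambda>x. \<integral>\<^sup>+t. \<integral>\<^sup>+s. F (fst x) (snd x) s t \<partial>\<xi>' (snd x) \<partial>\<eta>' (snd x)) \<in> borel_measurable (lam \<Otimes>\<^sub>M P)"
    by (rule measurable_iterated_finite_version[OF measurable_snd]) measurable
  then have Z: "(\<lambda>(g, \<omega>). Z g \<omega>) \<in> borel_measurable (lam \<Otimes>\<^sub>M P)"
    unfolding Z_def by (simp add: case_prod_beta')
  have swap: "(\<integral>\<^sup>+t. \<integral>\<^sup>+s. \<integral>\<^sup>+g. F g \<omega> s t \<partial>lam \<partial>\<xi> \<omega> \<partial>\<eta> \<omega>) = (\<integral>\<^sup>+g. Z g \<omega> \<partial>lam)"
    if "\<omega> \<in> finite_points P S \<xi>" "\<omega> \<in> finite_points P S \<eta>" for \<omega>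
  proof -
    have "\<omega> \<in> space P" using that finite_points_subset_space[OF random_measure_\<xi>] by auto
    then have F\<omega>: "(\<lambda>(g, s, t). F g \<omega> s t) \<in> borel_measurable (lam \<Otimes>\<^sub>M S \<Otimes>\<^sub>M S)"
      by measurable
    show ?thesis
      using nn_integral_haar_swap[OF that F\<omega>] that unfolding Z_def
      by (simp add: finite_version_eq[OF random_measure_\<xi>] finite_version_eq[OF random_measure_\<eta>])
  qed
  have "(\<integral>\<^sup>+\<omega>. \<integral>\<^sup>+t. \<integral>\<^sup>+s. \<integral>\<^sup>+g. F g \<omega> s t \<partial>lam \<partial>\<xi> \<omega> \<partial>\<eta> \<omega> \<partial>P) = (\<integral>\<^sup>+\<omega>. \<integral>\<^sup>+g. Z g \<omega> \<partial>lam \<partial>P)"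
    using AE_finite_points[OF random_measure_\<xi>] AE_finite_points[OF random_measure_\<eta>]
    by (intro nn_integral_cong_AE, eventually_elim) (rule swap)
  also have "\<dots> = (\<integral>\<^sup>+g. \<integral>\<^sup>+\<omega>. Z g \<omega> \<partial>P \<partial>lam)"
    by (rule lamP.Fubini'[OF Z])
  also have "\<dots> = (\<integral>\<^sup>+g. \<integral>\<^sup>+\<omega>. \<integral>\<^sup>+t. \<integral>\<^sup>+s. F g \<omega> s t \<partial>\<xi> \<omega> \<partial>\<eta> \<omega> \<partial>P \<partial>lam)"
    by (simp only: Z_def expectation_finite_version)
  finally show ?thesis .
qed

text \<open>The exchange formula: both sides equal the integral over the group of the shifted
  expectations, which agree by stationarity.\<close>

lemma exchange_formula:
  assumes p: "(\<lambda>(s, t). p s t) \<in> borel_measurable (S \<Otimes>\<^sub>M S)" and [measurable]: "q \<in> borel_measurable S"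
  shows "(\<integral>\<^sup>+\<omega>. \<integral>\<^sup>+t. \<integral>\<^sup>+s. m \<omega> s t * p s t * orbit_integral q t \<partial>\<xi> \<omega> \<partial>\<eta> \<omega> \<partial>P)
       = (\<integral>\<^sup>+\<omega>. \<integral>\<^sup>+t. \<integral>\<^sup>+s. m \<omega> s t * q t * (\<integral>\<^sup>+g. p (act (-g) s) (act (-g) t) \<partial>lam) \<partial>\<xi> \<omega> \<partial>\<eta> \<omega> \<partial>P)"
proof -
  have [measurable (raw)]: "(\<lambda>x. p (f x) (g x)) \<in> borel_measurable M"
    if "f \<in> measurable M S" "g \<in> measurable M S" for f g and M :: "'z measure"
    using measurable_compose[OF measurable_Pair[OF that] p] by simp
  have "(\<integral>\<^sup>+\<omega>. \<integral>\<^sup>+t. \<integral>\<^sup>+s. m \<omega> s t * p s t * orbit_integral q t \<partial>\<xi> \<omega> \<partial>\<eta> \<omega> \<partial>P)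
      = (\<integral>\<^sup>+\<omega>. \<integral>\<^sup>+t. \<integral>\<^sup>+s. \<integral>\<^sup>+g. m \<omega> s t * p s t * q (act g t) \<partial>lam \<partial>\<xi> \<omega> \<partial>\<eta> \<omega> \<partial>P)"
  proof (rule expectation_cong)
    fix \<omega> s t assume "t \<in> space S"
    then have "(\<lambda>g. q (act g t)) \<in> borel_measurable lam" by measurable
    then show "m \<omega> s t * p s t * orbit_integral q t = (\<integral>\<^sup>+g. m \<omega> s t * p s t * q (act g t) \<partial>lam)"
      by (simp add: orbit_integral_def nn_integral_cmult)
  qed
  also have "\<dots> = (\<integral>\<^sup>+g. \<integral>\<^sup>+\<omega>. \<integral>\<^sup>+t. \<integral>\<^sup>+s. m \<omega> s t * p s t * q (act g t) \<partial>\<xi> \<omega> \<partial>\<eta> \<omega> \<partial>P \<partial>lam)"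
    by (rule expectation_haar_swap) measurable
  also have "\<dots> = (\<integral>\<^sup>+g. \<integral>\<^sup>+\<omega>. \<integral>\<^sup>+t. \<integral>\<^sup>+s. m \<omega> s t * p (act (-g) s) (act (-g) t) * q t \<partial>\<xi> \<omega> \<partial>\<eta> \<omega> \<partial>P \<partial>lam)"
  proof (rule nn_integral_cong)
    fix g
    have "(\<integral>\<^sup>+\<omega>. \<integral>\<^sup>+t. \<integral>\<^sup>+s. m \<omega> s t * p s t * q (act g t) \<partial>\<xi> \<omega> \<partial>\<eta> \<omega> \<partial>P)
      = (\<integral>\<^sup>+\<omega>. \<integral>\<^sup>+t. \<integral>\<^sup>+s. m (\<theta> (-g) \<omega>) (act (-g) s) (act (-g) t) * p (act (-g) s) (act (-g) t)
          * q (act g (act (-g) t)) \<partial>\<xi> \<omega> \<partial>\<eta> \<omega> \<partial>P)"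
      by (rule expectation_invariant) measurable
    also have "\<dots> = (\<integral>\<^sup>+\<omega>. \<integral>\<^sup>+t. \<integral>\<^sup>+s. m \<omega> s t * p (act (-g) s) (act (-g) t) * q t \<partial>\<xi> \<omega> \<partial>\<eta> \<omega> \<partial>P)"
      by (rule expectation_cong) (simp add: m_invariant act_act_uminus)
    finally show "(\<integral>\<^sup>+\<omega>. \<integral>\<^sup>+t. \<integral>\<^sup>+s. m \<omega> s t * p s t * q (act g t) \<partial>\<xi> \<omega> \<partial>\<eta> \<omega> \<partial>P)
      = (\<integral>\<^sup>+\<omega>. \<integral>\<^sup>+t. \<integral>\<^sup>+s. m \<omega> s t * p (act (-g) s) (act (-g) t) * q t \<partial>\<xi> \<omega> \<partial>\<eta> \<omega> \<partial>P)" .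
  qed
  also have "\<dots> = (\<integral>\<^sup>+\<omega>. \<integral>\<^sup>+t. \<integral>\<^sup>+s. \<integral>\<^sup>+g. m \<omega> s t * p (act (-g) s) (act (-g) t) * q t \<partial>lam \<partial>\<xi> \<omega> \<partial>\<eta> \<omega> \<partial>P)"
    by (rule expectation_haar_swap[symmetric]) measurable
  also have "\<dots> = (\<integral>\<^sup>+\<omega>. \<integral>\<^sup>+t. \<integral>\<^sup>+s. m \<omega> s t * q t * (\<integral>\<^sup>+g. p (act (-g) s) (act (-g) t) \<partial>lam) \<partial>\<xi> \<omega> \<partial>\<eta> \<omega> \<partial>P)"
  proof (rule expectation_cong)
    fix \<omega> s t assume "s \<in> space S" "t \<in> space S"
    then have "(\<lambda>g. p (act (-g) s) (act (-g) t)) \<in> borel_measurable lam" by measurable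
    then show "(\<integral>\<^sup>+g. m \<omega> s t * p (act (-g) s) (act (-g) t) * q t \<partial>lam)
        = m \<omega> s t * q t * (\<integral>\<^sup>+g. p (act (-g) s) (act (-g) t) \<partial>lam)"
      by (simp add: nn_integral_cmult nn_integral_multc ac_simps)
  qed
  finally show ?thesis .
qed

lemma expectation_constant_orbit_ratio:
  assumes v[measurable]: "v \<in> borel_measurable S" and w[measurable]: "w \<in> borel_measurable S"
    and v_pos: "\<And>s. s \<in> space S \<Longrightarrow> 0 < orbit_integral v s \<and> orbit_integral v s < \<infinity>"
    and const: "\<And>s t. s \<in> space S \<Longrightarrow> t \<in> space S \<Longrightarrow>
      orbit_integral w s / orbit_integral v s = orbit_integral w t / orbit_integral v t"
  shows "(\<integral>\<^sup>+\<omega>. \<integral>\<^sup>+t. \<integral>\<^sup>+s. m \<omega> s t * (w s / orbit_integral v s) * orbit_integral v t \<partial>\<xi> \<omega> \<partial>\<eta> \<omega> \<partial>P)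
       = (\<integral>\<^sup>+\<omega>. \<integral>\<^sup>+t. \<integral>\<^sup>+s. w t * m \<omega> s t \<partial>\<xi> \<omega> \<partial>\<eta> \<omega> \<partial>P)"
proof -
  have "(\<integral>\<^sup>+\<omega>. \<integral>\<^sup>+t. \<integral>\<^sup>+s. m \<omega> s t * (w s / orbit_integral v s) * orbit_integral v t \<partial>\<xi> \<omega> \<partial>\<eta> \<omega> \<partial>P)
      = (\<integral>\<^sup>+\<omega>. \<integral>\<^sup>+t. \<integral>\<^sup>+s. m \<omega> s t * v t
      * (\<integral>\<^sup>+g. w (act (-g) s) / orbit_integral v (act (-g) s) \<partial>lam) \<partial>\<xi> \<omega> \<partial>\<eta> \<omega> \<partial>P)"
    by (rule exchange_formula[of "\<lambda>s t. w s / orbit_integral v s" v]) measurable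
  also have "\<dots> = (\<integral>\<^sup>+\<omega>. \<integral>\<^sup>+t. \<integral>\<^sup>+s. m \<omega> s t * v t * (orbit_integral w s / orbit_integral v s) \<partial>\<xi> \<omega> \<partial>\<eta> \<omega> \<partial>P)"
    by (rule expectation_cong) (simp add: nn_integral_inverse_orbit_ratio[OF v w v_pos])
  also have "\<dots> = (\<integral>\<^sup>+\<omega>. \<integral>\<^sup>+t. \<integral>\<^sup>+s. m \<omega> s t * v t * (orbit_integral w t / orbit_integral v t) \<partial>\<xi> \<omega> \<partial>\<eta> \<omega> \<partial>P)"
    by (rule expectation_cong) (metis const)
  also have "\<dots> = (\<integral>\<^sup>+\<omega>. \<integral>\<^sup>+t. \<integral>\<^sup>+s. m \<omega> s t * v t
      * (\<integral>\<^sup>+g. w (act (-g) t) / orbit_integral v (act (-g) t) \<partial>lam) \<partial>\<xi> \<omega> \<partial>\<eta> \<omega> \<partial>P)"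
    by (rule expectation_cong) (simp add: nn_integral_inverse_orbit_ratio[OF v w v_pos])
  also have "\<dots> = (\<integral>\<^sup>+\<omega>. \<integral>\<^sup>+t. \<integral>\<^sup>+s. m \<omega> s t * (w t / orbit_integral v t) * orbit_integral v t \<partial>\<xi> \<omega> \<partial>\<eta> \<omega> \<partial>P)"
    by (rule exchange_formula[of "\<lambda>s t. w t / orbit_integral v t" v, symmetric]) measurable
  also have "\<dots> = (\<integral>\<^sup>+\<omega>. \<integral>\<^sup>+t. \<integral>\<^sup>+s. w t * m \<omega> s t \<partial>\<xi> \<omega> \<partial>\<eta> \<omega> \<partial>P)"
  proof (rule expectation_cong)
    fix \<omega> s t assume "t \<in> space S"
    then have "orbit_integral v t \<noteq> 0" "orbit_integral v t < \<infinity>" using v_pos[of t] by auto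
    then have "w t / orbit_integral v t * orbit_integral v t = w t" by (simp add: ennreal_divide_times)
    then show "m \<omega> s t * (w t / orbit_integral v t) * orbit_integral v t = w t * m \<omega> s t"
      by (metis mult.assoc mult.commute)
  qed
  finally show ?thesis .
qed

end

theorem corollary6p10:
  fixes lam :: "'g::{topological_group_add, second_countable_topology, t2_space} measure"
    and S :: "'s measure" and act :: "'g \<Rightarrow> 's \<Rightarrow> 's" and Orb :: "'s set"
    and \<theta> :: "'g \<Rightarrow> 'w \<Rightarrow> 'w" and P :: "'w measure"
    and v w :: "'s \<Rightarrow> ennreal"
    and \<xi> \<eta> :: "'w \<Rightarrow> 's measure" and m :: "'w \<Rightarrow> 's \<Rightarrow> 's \<Rightarrow> ennreal"
  assumes G: "lcsc_group TYPE('g)"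
    and haar: "left_haar lam"
    and S_borel: "borel_space S"
    and act: "measurable_action TYPE('g) S act"
    and proper: "proper_action lam S act"
    and Orb: "orbit_representatives S act Orb"
    and \<theta>: "measurable_action TYPE('g) P \<theta>"
    and P_sigma: "sigma_finite_measure P"
    and P_inv: "\<And>g. distr P P (\<theta> g) = P"
    and v_meas: "v \<in> borel_measurable S" and w_meas: "w \<in> borel_measurable S"
    and v_pos: "\<And>s. s \<in> space S \<Longrightarrow> 0 < (\<integral>\<^sup>+ x. v x \<partial>orbit_measure lam S act s)
                         \<and> (\<integral>\<^sup>+ x. v x \<partial>orbit_measure lam S act s) < \<infinity>"
    and w_pos: "\<And>s. s \<in> space S \<Longrightarrow> 0 < (\<integral>\<^sup>+ x. w x \<partial>orbit_measure lam S act s)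
                         \<and> (\<integral>\<^sup>+ x. w x \<partial>orbit_measure lam S act s) < \<infinity>"
    and ratio: "\<And>b b'. b \<in> Orb \<Longrightarrow> b' \<in> Orb \<Longrightarrow>
        (\<integral>\<^sup>+ x. w x \<partial>orbit_measure lam S act b) / (\<integral>\<^sup>+ x. v x \<partial>orbit_measure lam S act b)
      = (\<integral>\<^sup>+ x. w x \<partial>orbit_measure lam S act b') / (\<integral>\<^sup>+ x. v x \<partial>orbit_measure lam S act b')"
    and \<xi>: "invariant_random_measure P S \<theta> act \<xi>"
    and \<eta>: "invariant_random_measure P S \<theta> act \<eta>"
    and m: "invariant_kernel_fn P S \<theta> act m"
  shows "(\<integral>\<^sup>+ \<omega>. (\<integral>\<^sup>+ t. (\<integral>\<^sup>+ s. Delta lam S act v s t * w s * m \<omega> s t \<partial>\<xi> \<omega>) \<partial>\<eta> \<omega>) \<partial>P)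
       = (\<integral>\<^sup>+ \<omega>. (\<integral>\<^sup>+ t. (\<integral>\<^sup>+ s. w t * m \<omega> s t \<partial>\<xi> \<omega>) \<partial>\<eta> \<omega>) \<partial>P)"
proof -
  interpret stationary_random_measures lam S act P \<theta> \<xi> \<eta> m
    by (intro stationary_random_measures.intro haar_action.intro stationary_random_measures_axioms.intro) fact+
  have v_pos': "\<And>s. s \<in> space S \<Longrightarrow> 0 < orbit_integral v s \<and> orbit_integral v s < \<infinity>"
    using v_pos by (simp add: nn_integral_orbit_measure[OF v_meas])
  have Orb_space: "Orb \<subseteq> space S"
    using Orb sets.sets_into_space unfolding orbit_representatives_def by auto
  have ratio': "orbit_integral w b / orbit_integral v b = orbit_integral w b' / orbit_integral v b'"
    if "b \<in> Orb" "b' \<in> Orb" for b b'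
    using ratio[OF that] subsetD[OF Orb_space that(1)] subsetD[OF Orb_space that(2)]
    by (simp add: nn_integral_orbit_measure[OF v_meas] nn_integral_orbit_measure[OF w_meas])
  have "(\<integral>\<^sup>+ \<omega>. (\<integral>\<^sup>+ t. (\<integral>\<^sup>+ s. Delta lam S act v s t * w s * m \<omega> s t \<partial>\<xi> \<omega>) \<partial>\<eta> \<omega>) \<partial>P)
      = (\<integral>\<^sup>+\<omega>. \<integral>\<^sup>+t. \<integral>\<^sup>+s. m \<omega> s t * (w s / orbit_integral v s) * orbit_integral v t \<partial>\<xi> \<omega> \<partial>\<eta> \<omega> \<partial>P)"
    by (rule expectation_cong) (simp add: Delta_def nn_integral_orbit_measure[OF v_meas] divide_ennreal_def ac_simps)
  also have "\<dots> = (\<integral>\<^sup>+ \<omega>. (\<integral>\<^sup>+ t. (\<integral>\<^sup>+ s. w t * m \<omega> s t \<partial>\<xi> \<omega>) \<partial>\<eta> \<omega>) \<partial>P)"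
    by (rule expectation_constant_orbit_ratio[OF v_meas w_meas v_pos'
          orbit_ratio_constant[OF v_meas w_meas v_pos' Orb ratio']])
  finally show ?thesis .
qed

end
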